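(* In the two-asset bid-ask model described in the context, condition (NA2) holds if and only if, for all $t\le T-1$, $$\operatorname{ess\,sup}_{\mathcal{F}_t}S^a_{t+1}\ge S^a_t\quad\text{and}\quad S^b_t\ge\operatorname{ess\,inf}_{\mathcal{F}_t}S^b_{t+1}\quad\text{a.s.}$$
   Context: $(\Omega,\mathcal{F},(\mathcal{F}_t)_{t=0,\dots,T},\mathbb{P})$ filtered complete probability space, $\mathcal{F}_0$ trivial. $d=2$. For each $t$, $S^b_t,S^a_t$ are $\mathcal{F}_t$-measurable random variables with $0<S^b_t\le S^a_t$ a.s., and the solvency cone is $\mathbf{K}_t=\{x\in\mathbb{R}^2:\ x_1+y\,x_2\ge0\ \text{for all }y\in[S^b_t,S^a_t]\}$ (the cone generated by $S^a_te_1-e_2$ and $-S^b_te_1+e_2$). $L^0(\Gamma,\mathcal{F}_t)$: $\mathcal{F}_t$-measurable random vectors a.s. in $\Gamma$. $\mathsf{A}_{t,T}=\sum_{u=t}^TL^0(-\mathbf{K}_u,\mathcal{F}_u)$. (NA2): for every $t$ and $\eta_t\in L^0(\mathbb{R}^2,\mathcal{F}_t)$, if $(\eta_t+\mathsf{A}_{t,T})\cap L^0(\mathbf{K}_T,\mathcal{F}_T)\neq\emptyset$ then $\eta_t\in L^0(\mathbf{K}_t,\mathcal{F}_t)$. $\operatorname{ess\,sup}_{\mathcal{F}_t}$ and $\operatorname{ess\,inf}_{\mathcal{F}_t}$ denote the conditional essential supremum/infimum: the smallest (resp. largest) $\mathcal{F}_t$-measurable extended random variable a.s. dominating (resp. dominated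 by) the given variable. *)

theory Defs
  imports "HOL-Probability.Probability"
begin

definition solv_cone :: "(nat \<Rightarrow> 'a \<Rightarrow> real) \<Rightarrow> (nat \<Rightarrow> 'a \<Rightarrow> real) \<Rightarrow> nat \<Rightarrow> 'a \<Rightarrow> (real \<times> real) set" where
  "solv_cone Sb Sa t w = {x. \<forall>y \<in> {Sb t w .. Sa t w}. fst x + y * snd x \<ge> 0}"

definition L0 :: "'a measure \<Rightarrow> 'a measure \<Rightarrow> ('a \<Rightarrow> (real \<times> real) set) \<Rightarrow> ('a \<Rightarrow> real \<times> real) set" where
  "L0 M G \<Gamma> = {\<xi>. \<xi> \<in> borel_measurable G \<and> (AE w in M. \<xi> w \<in> \<Gamma> w)}"

definition A_set :: "'a measure \<Rightarrow> (nat \<Rightarrow> 'a measure) \<Rightarrow> (nat \<Rightarrow> 'a \<Rightarrow> real) \<Rightarrow> (nat \<Rightarrow> 'a \<Rightarrow> real)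
    \<Rightarrow> nat \<Rightarrow> nat \<Rightarrow> ('a \<Rightarrow> real \<times> real) set" where
  "A_set M F Sb Sa t T = {\<xi>. \<exists>\<xi>s. (\<forall>u \<in> {t..T}. \<xi>s u \<in> L0 M (F u) (\<lambda>w. uminus ` solv_cone Sb Sa u w))
        \<and> \<xi> = (\<lambda>w. \<Sum>u\<in>{t..T}. \<xi>s u w)}"

definition NA2 :: "'a measure \<Rightarrow> (nat \<Rightarrow> 'a measure) \<Rightarrow> (nat \<Rightarrow> 'a \<Rightarrow> real) \<Rightarrow> (nat \<Rightarrow> 'a \<Rightarrow> real) \<Rightarrow> nat \<Rightarrow> bool" where
  "NA2 M F Sb Sa T \<longleftrightarrow>
     (\<forall>t \<le> T. \<forall>\<eta> \<in> borel_measurable (F t).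
        (\<exists>\<xi> \<in> A_set M F Sb Sa t T. (\<lambda>w. \<eta> w + \<xi> w) \<in> L0 M (F T) (solv_cone Sb Sa T))
        \<longrightarrow> \<eta> \<in> L0 M (F t) (solv_cone Sb Sa t))"

definition is_cond_ess_sup :: "'a measure \<Rightarrow> 'a measure \<Rightarrow> ('a \<Rightarrow> real) \<Rightarrow> ('a \<Rightarrow> ereal) \<Rightarrow> bool" where
  "is_cond_ess_sup M G X Y \<longleftrightarrow> Y \<in> borel_measurable G \<and> (AE w in M. ereal (X w) \<le> Y w) \<and>
     (\<forall>Z \<in> borel_measurable G. (AE w in M. ereal (X w) \<le> Z w) \<longrightarrow> (AE w in M. Y w \<le> Z w))"

definition is_cond_ess_inf :: "'a measure \<Rightarrow> 'a measure \<Rightarrow> ('a \<Rightarrow> real) \<Rightarrow> ('a \<Rightarrow> ereal) \<Rightarrow> bool" where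
  "is_cond_ess_inf M G X Y \<longleftrightarrow> Y \<in> borel_measurable G \<and> (AE w in M. Y w \<le> ereal (X w)) \<and>
     (\<forall>Z \<in> borel_measurable G. (AE w in M. Z w \<le> ereal (X w)) \<longrightarrow> (AE w in M. Z w \<le> Y w))"

definition cond_ess_sup :: "'a measure \<Rightarrow> 'a measure \<Rightarrow> ('a \<Rightarrow> real) \<Rightarrow> 'a \<Rightarrow> ereal" where
  "cond_ess_sup M G X = (SOME Y. is_cond_ess_sup M G X Y)"

definition cond_ess_inf :: "'a measure \<Rightarrow> 'a measure \<Rightarrow> ('a \<Rightarrow> real) \<Rightarrow> 'a \<Rightarrow> ereal" where
  "cond_ess_inf M G X = (SOME Y. is_cond_ess_inf M G X Y)"

end

theory Submission
  imports Defs
begin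

text \<open>A position \<open>x\<close> is solvent at time \<open>t\<close> iff its break-even price \<open>-x\<^sub>1/x\<^sub>2\<close> is at most
  the bid when \<open>x\<^sub>2 > 0\<close> and at least the ask when \<open>x\<^sub>2 < 0\<close> (and \<open>x\<^sub>1 \<ge> 0\<close> when \<open>x\<^sub>2 = 0\<close>).
  The condition of the theorem says that every \<open>F\<^sub>t\<close>-measurable upper bound of \<open>S\<^sup>a\<^sub>t\<^sub>+\<^sub>1\<close> also
  bounds \<open>S\<^sup>a\<^sub>t\<close>, and every \<open>F\<^sub>t\<close>-measurable lower bound of \<open>S\<^sup>b\<^sub>t\<^sub>+\<^sub>1\<close> also bounds \<open>S\<^sup>b\<^sub>t\<close>.
  If an \<open>F\<^sub>t\<close>-measurable \<open>Z \<ge> S\<^sup>a\<^sub>t\<^sub>+\<^sub>1\<close> were below \<open>S\<^sup>a\<^sub>t\<close> on a non-null set, then selling one unit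
  there for \<open>Z\<close> at time \<open>t\<close> and buying it back at \<open>t + 1\<close> would turn an insolvent position into
  a solvent one, contradicting (NA2); the bid side is symmetric. Conversely, the break-even price of
  an \<open>F\<^sub>t\<close>-measurable position solvent at \<open>t + 1\<close> is an \<open>F\<^sub>t\<close>-measurable bound of tomorrow's
  prices, hence of today's, so the position is solvent at \<open>t\<close>; (NA2) follows by backward induction.
  The conditional essential supremum exists as the minimiser of \<open>E[arctan Z]\<close> over the
  \<open>F\<^sub>t\<close>-measurable \<open>Z\<close> dominating the given variable.\<close>

lemma borel_measurable_fst_real_pair [measurable (raw)]:
  fixes \<zeta> :: "'a \<Rightarrow> real \<times> real"
  assumes "\<zeta> \<in> borel_measurable N"
  shows "(\<lambda>w. fst (\<zeta> w)) \<in> borel_measurable N"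
  using assms by (rule measurable_compose) (intro borel_measurable_continuous_onI continuous_intros)

lemma borel_measurable_snd_real_pair [measurable (raw)]:
  fixes \<zeta> :: "'a \<Rightarrow> real \<times> real"
  assumes "\<zeta> \<in> borel_measurable N"
  shows "(\<lambda>w. snd (\<zeta> w)) \<in> borel_measurable N"
  using assms by (rule measurable_compose) (intro borel_measurable_continuous_onI continuous_intros)

lemma (in filtration) measurable_F_mono:
  assumes "i \<le> j" "f \<in> measurable (F i) N"
  shows "f \<in> measurable (F j) N"
proof (rule measurable_from_subalg[OF _ assms(2)])
  show "subalgebra (F j) (F i)"
    unfolding subalgebra_def using space_F sets_F_mono[OF assms(1)] by simp
qed

section \<open>Existence of conditional essential bounds\<close>

text \<open>Any bounded strictly increasing map would do; it makes extended-real functions integrable.\<close>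
definition arctan_ereal :: "ereal \<Rightarrow> real" where
  "arctan_ereal z = (if z = \<infinity> then 2 else if z = -\<infinity> then -2 else arctan (real_of_ereal z))"

lemma abs_arctan_ereal_le: "\<bar>arctan_ereal z\<bar> \<le> 2"
proof -
  have "\<bar>arctan x\<bar> \<le> 2" for x
    using arctan_bounded[of x] pi_less_4 by auto
  then show ?thesis by (auto simp: arctan_ereal_def)
qed

lemma strict_mono_arctan_ereal: "strict_mono arctan_ereal"
proof (rule strict_monoI)
  have "- 2 < arctan x \<and> arctan x < 2" for x
    using arctan_bounded[of x] pi_less_4 by auto
  then show "z < z' \<Longrightarrow> arctan_ereal z < arctan_ereal z'" for z z'
    by (cases z; cases z') (auto simp: arctan_ereal_def arctan_less_iff)
qed

lemma borel_measurable_arctan_ereal [measurable]: "arctan_ereal \<in> borel_measurable borel"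
  unfolding arctan_ereal_def by measurable

lemma AE_eq_if_le_integral_ge:
  fixes f g :: "'a \<Rightarrow> real"
  assumes "integrable M f" "integrable M g" "\<And>w. f w \<le> g w"
    and "integral\<^sup>L M g \<le> integral\<^sup>L M f"
  shows "AE w in M. f w = g w"
proof -
  have "integral\<^sup>L M (\<lambda>w. g w - f w) = 0"
    using assms by (intro antisym integral_nonneg_AE AE_I2) auto
  then have "AE w in M. g w - f w = 0"
    using assms by (subst integral_nonneg_eq_0_iff_AE[symmetric]) auto
  then show ?thesis by auto
qed

lemma (in finite_measure) integrable_arctan_ereal:
  assumes "subalgebra M G" "Z \<in> borel_measurable G"
  shows "integrable M (\<lambda>w. arctan_ereal (Z w))"
proof (rule integrable_const_bound[where B=2])
  have [measurable]: "Z \<in> borel_measurable M"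
    using measurable_from_subalg[OF assms] .
  show "(\<lambda>w. arctan_ereal (Z w)) \<in> borel_measurable M" by measurable
qed (simp add: abs_arctan_ereal_le)

lemma (in prob_space) integral_arctan_ereal_minimizer:
  assumes G: "subalgebra M G"
    and Zs: "Zs \<subseteq> borel_measurable G" "Zs \<noteq> {}"
    and INF_closed: "\<And>Z :: nat \<Rightarrow> 'a \<Rightarrow> ereal. (\<And>n. Z n \<in> Zs) \<Longrightarrow> (\<lambda>w. INF n. Z n w) \<in> Zs"
  shows "\<exists>Y\<in>Zs. \<forall>Z\<in>Zs. (\<integral>w. arctan_ereal (Y w) \<partial>M) \<le> (\<integral>w. arctan_ereal (Z w) \<partial>M)"
proof -
  define J where "J Z = (\<integral>w. arctan_ereal (Z w) \<partial>M)" for Z :: "'a \<Rightarrow> ereal"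
  have integrable: "integrable M (\<lambda>w. arctan_ereal (Z w))" if "Z \<in> Zs" for Z
    using that Zs(1) by (intro integrable_arctan_ereal[OF G]) auto
  have "-2 \<le> J Z" if "Z \<in> Zs" for Z
  proof -
    have "-2 \<le> arctan_ereal z" for z
      using abs_arctan_ereal_le[of z] by linarith
    then have "(\<integral>w. -2 \<partial>M) \<le> J Z"
      unfolding J_def using integrable[OF that] by (intro integral_mono) auto
    then show ?thesis by (simp add: prob_space)
  qed
  then have bdd: "bdd_below (J ` Zs)" by (intro bdd_belowI2)
  define m where "m = (INF Z\<in>Zs. J Z)"
  have "\<exists>Z\<in>Zs. J Z < m + 1 / Suc n" for n :: nat
    using cInf_lessD[of "J ` Zs" "m + 1 / Suc n"] Zs(2) unfolding m_def by auto
  then obtain Z where Z: "\<And>n. Z n \<in> Zs" "\<And>n. J (Z n) < m + 1 / Suc n" by metis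
  define Y where "Y w = (INF n. Z n w)" for w
  have Y: "Y \<in> Zs" unfolding Y_def using Z(1) by (rule INF_closed)
  have "J Y \<le> m"
  proof (rule field_le_epsilon)
    fix e :: real assume "0 < e"
    then obtain n :: nat where n: "1 / Suc n < e" using nat_approx_posE by blast
    have "Y w \<le> Z n w" for w
      unfolding Y_def by (rule INF_lower) simp
    then have "arctan_ereal (Y w) \<le> arctan_ereal (Z n w)" for w
      by (simp add: strict_mono_less_eq[OF strict_mono_arctan_ereal])
    then have "J Y \<le> J (Z n)"
      unfolding J_def using integrable[OF Y] integrable[OF Z(1)] by (intro integral_mono)
    with Z(2)[of n] n show "J Y \<le> m + e" by simp
  qed
  moreover have "m \<le> J Z'" if "Z' \<in> Zs" for Z'
    unfolding m_def using bdd that by (rule cINF_lower)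
  ultimately show ?thesis using Y unfolding J_def by force
qed

lemma cond_ess_sup_exists:
  assumes "prob_space M" "subalgebra M G"
  shows "\<exists>Y. is_cond_ess_sup M G X Y"
proof -
  interpret prob_space M by fact
  define Zs where "Zs = {Z \<in> borel_measurable G. AE w in M. ereal (X w) \<le> Z w}"
  have "\<exists>Y\<in>Zs. \<forall>Z\<in>Zs. (\<integral>w. arctan_ereal (Y w) \<partial>M) \<le> (\<integral>w. arctan_ereal (Z w) \<partial>M)"
  proof (rule integral_arctan_ereal_minimizer[OF assms(2)])
    show "Zs \<subseteq> borel_measurable G" unfolding Zs_def by blast
    show "Zs \<noteq> {}" unfolding Zs_def by (auto intro!: exI[of _ "\<lambda>_. \<infinity>"])
    fix Z :: "nat \<Rightarrow> 'a \<Rightarrow> ereal" assume Z: "\<And>n. Z n \<in> Zs"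
    then have "AE w in M. \<forall>n. ereal (X w) \<le> Z n w"
      unfolding Zs_def by (simp add: AE_all_countable)
    then have "AE w in M. ereal (X w) \<le> (INF n. Z n w)"
      by eventually_elim (auto intro: INF_greatest)
    with Z show "(\<lambda>w. INF n. Z n w) \<in> Zs"
      unfolding Zs_def by (auto intro: borel_measurable_INF)
  qed
  then obtain Y where Y: "Y \<in> Zs"
    and min: "\<And>Z. Z \<in> Zs \<Longrightarrow> (\<integral>w. arctan_ereal (Y w) \<partial>M) \<le> (\<integral>w. arctan_ereal (Z w) \<partial>M)"
    by blast
  have "AE w in M. Y w \<le> Z w" if "Z \<in> Zs" for Z
  proof -
    define W where "W w = min (Y w) (Z w)" for w
    have W: "W \<in> Zs" using Y that unfolding Zs_def W_def by auto
    have "AE w in M. arctan_ereal (W w) = arctan_ereal (Y w)"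
    proof (rule AE_eq_if_le_integral_ge)
      show "integrable M (\<lambda>w. arctan_ereal (W w))" "integrable M (\<lambda>w. arctan_ereal (Y w))"
        using W Y unfolding Zs_def by (auto intro: integrable_arctan_ereal[OF assms(2)])
      show "arctan_ereal (W w) \<le> arctan_ereal (Y w)" for w
        by (simp add: W_def strict_mono_less_eq[OF strict_mono_arctan_ereal])
    qed (rule min[OF W])
    then show ?thesis
      by eventually_elim (auto simp: W_def strict_mono_eq[OF strict_mono_arctan_ereal] min_def split: if_splits)
  qed
  with Y show ?thesis unfolding is_cond_ess_sup_def Zs_def by blast
qed

lemma is_cond_ess_inf_uminus:
  assumes "is_cond_ess_sup M G (\<lambda>w. - X w) Y"
  shows "is_cond_ess_inf M G X (\<lambda>w. - Y w)"
  unfolding is_cond_ess_inf_def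
proof (intro conjI ballI impI)
  have Y: "Y \<in> borel_measurable G" "AE w in M. ereal (- X w) \<le> Y w"
    and least: "\<And>Z. Z \<in> borel_measurable G \<Longrightarrow> (AE w in M. ereal (- X w) \<le> Z w) \<Longrightarrow> AE w in M. Y w \<le> Z w"
    using assms unfolding is_cond_ess_sup_def by auto
  show "(\<lambda>w. - Y w) \<in> borel_measurable G" using Y(1) by measurable
  show "AE w in M. - Y w \<le> ereal (X w)"
    using Y(2) by eventually_elim (metis ereal_uminus_le_reorder uminus_ereal.simps(1))
  fix Z assume Z: "Z \<in> borel_measurable G" "AE w in M. Z w \<le> ereal (X w)"
  have "AE w in M. ereal (- X w) \<le> - Z w"
    using Z(2) by eventually_elim (metis ereal_minus_le_minus uminus_ereal.simps(1))
  with Z(1) have "AE w in M. Y w \<le> - Z w"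
    by (intro least) measurable
  then show "AE w in M. Z w \<le> - Y w"
    by eventually_elim (metis ereal_minus_le_minus ereal_uminus_uminus)
qed

lemma is_cond_ess_sup_cond_ess_sup:
  assumes "prob_space M" "subalgebra M G"
  shows "is_cond_ess_sup M G X (cond_ess_sup M G X)"
  unfolding cond_ess_sup_def using cond_ess_sup_exists[OF assms] by (rule someI_ex)

lemma is_cond_ess_inf_cond_ess_inf:
  assumes "prob_space M" "subalgebra M G"
  shows "is_cond_ess_inf M G X (cond_ess_inf M G X)"
proof -
  obtain Y where "is_cond_ess_sup M G (\<lambda>w. - X w) Y"
    using cond_ess_sup_exists[OF assms] by blast
  then have "is_cond_ess_inf M G X (\<lambda>w. - Y w)"
    by (rule is_cond_ess_inf_uminus)
  then show ?thesis
    unfolding cond_ess_inf_def by (rule someI[where P = "is_cond_ess_inf M G X"])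
qed

lemma AE_le_cond_ess_sup_iff:
  assumes "prob_space M" "subalgebra M G"
  shows "(AE w in M. S w \<le> cond_ess_sup M G X w) \<longleftrightarrow>
    (\<forall>Z\<in>borel_measurable G. (AE w in M. ereal (X w) \<le> Z w) \<longrightarrow> (AE w in M. S w \<le> Z w))"
  (is "?le_sup \<longleftrightarrow> ?le_bounds")
proof
  note sup = is_cond_ess_sup_cond_ess_sup[OF assms, of X, unfolded is_cond_ess_sup_def]
  show "?le_bounds" if ?le_sup
  proof (intro ballI impI)
    fix Z assume "Z \<in> borel_measurable G" "AE w in M. ereal (X w) \<le> Z w"
    with sup have "AE w in M. cond_ess_sup M G X w \<le> Z w" by blast
    with \<open>?le_sup\<close> show "AE w in M. S w \<le> Z w" by eventually_elim (rule order_trans)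
  qed
  show ?le_sup if ?le_bounds
    using that sup by blast
qed

lemma AE_cond_ess_inf_le_iff:
  assumes "prob_space M" "subalgebra M G"
  shows "(AE w in M. cond_ess_inf M G X w \<le> S w) \<longleftrightarrow>
    (\<forall>Z\<in>borel_measurable G. (AE w in M. Z w \<le> ereal (X w)) \<longrightarrow> (AE w in M. Z w \<le> S w))"
  (is "?inf_le \<longleftrightarrow> ?bounds_le")
proof
  note inf = is_cond_ess_inf_cond_ess_inf[OF assms, of X, unfolded is_cond_ess_inf_def]
  show "?bounds_le" if ?inf_le
  proof (intro ballI impI)
    fix Z assume "Z \<in> borel_measurable G" "AE w in M. Z w \<le> ereal (X w)"
    with inf have "AE w in M. Z w \<le> cond_ess_inf M G X w" by blast
    with \<open>?inf_le\<close> show "AE w in M. Z w \<le> S w" by eventually_elim (rule order_trans)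
  qed
  show ?inf_le if ?bounds_le
    using that inf by blast
qed

section \<open>The solvency cone\<close>

lemma mem_uminus_image_iff:
  fixes x :: "'b::ab_group_add"
  shows "x \<in> uminus ` A \<longleftrightarrow> - x \<in> A"
  by (auto intro: image_eqI[where x = "- x"])

lemma mem_solv_cone_iff:
  assumes "Sb t w \<le> Sa t w"
  shows "x \<in> solv_cone Sb Sa t w \<longleftrightarrow> 0 \<le> fst x + Sb t w * snd x \<and> 0 \<le> fst x + Sa t w * snd x"
proof
  assume endpoints: "0 \<le> fst x + Sb t w * snd x \<and> 0 \<le> fst x + Sa t w * snd x"
  have "0 \<le> fst x + y * snd x" if "Sb t w \<le> y" "y \<le> Sa t w" for y
  proof (cases "0 \<le> snd x")
    case True
    then have "Sb t w * snd x \<le> y * snd x" using that by (intro mult_right_mono)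
    with endpoints show ?thesis by linarith
  next
    case False
    then have "Sa t w * snd x \<le> y * snd x" using that by (intro mult_right_mono_neg) auto
    with endpoints show ?thesis by linarith
  qed
  then show "x \<in> solv_cone Sb Sa t w" unfolding solv_cone_def by auto
qed (use assms in \<open>auto simp: solv_cone_def\<close>)

lemma mem_solv_cone_iff_break_even:
  assumes "Sb t w \<le> Sa t w"
  shows "x \<in> solv_cone Sb Sa t w \<longleftrightarrow>
    (0 < snd x \<longrightarrow> - fst x / snd x \<le> Sb t w) \<and>
    (snd x < 0 \<longrightarrow> Sa t w \<le> - fst x / snd x) \<and>
    (snd x = 0 \<longrightarrow> 0 \<le> fst x)"
proof -
  consider "0 < snd x" | "snd x < 0" | "snd x = 0" by linarith
  then show ?thesis
  proof cases
    case 1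
    then have "- fst x / snd x \<le> Sb t w \<longleftrightarrow> 0 \<le> fst x + Sb t w * snd x"
      by (auto simp: field_simps)
    moreover have "Sb t w * snd x \<le> Sa t w * snd x"
      using 1 assms by (simp add: mult_right_mono)
    ultimately show ?thesis
      using 1 unfolding mem_solv_cone_iff[where Sb = Sb and Sa = Sa, OF assms] by linarith
  next
    case 2
    then have "Sa t w \<le> - fst x / snd x \<longleftrightarrow> 0 \<le> fst x + Sa t w * snd x"
      by (auto simp: field_simps)
    moreover have "Sa t w * snd x \<le> Sb t w * snd x"
      using 2 assms by (simp add: mult_right_mono_neg)
    ultimately show ?thesis
      using 2 unfolding mem_solv_cone_iff[where Sb = Sb and Sa = Sa, OF assms] by linarith
  next
    case 3
    then show ?thesis by (simp add: mem_solv_cone_iff[where Sb = Sb and Sa = Sa, OF assms])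
  qed
qed

lemma solv_cone_add:
  assumes "x \<in> solv_cone Sb Sa t w" "z \<in> solv_cone Sb Sa t w"
  shows "x + z \<in> solv_cone Sb Sa t w"
  using assms unfolding solv_cone_def by (fastforce simp: distrib_left)

lemma cash_mem_solv_cone: "0 \<le> a \<Longrightarrow> (a, 0) \<in> solv_cone Sb Sa t w"
  unfolding solv_cone_def by simp

lemma zero_mem_solv_cone: "0 \<in> solv_cone Sb Sa t w"
  unfolding solv_cone_def by simp

lemma AE_mem_solv_cone_cancel:
  assumes "AE w in M. \<eta> w + \<xi> w \<in> solv_cone Sb Sa t w"
    and "\<xi> \<in> L0 M G (\<lambda>w. uminus ` solv_cone Sb Sa t w)"
  shows "AE w in M. \<eta> w \<in> solv_cone Sb Sa t w"
proof -
  have "AE w in M. - \<xi> w \<in> solv_cone Sb Sa t w"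
    using assms(2) unfolding L0_def by (simp add: mem_uminus_image_iff)
  with assms(1) show ?thesis
    by eventually_elim (metis solv_cone_add add_diff_cancel diff_conv_add_uminus)
qed

lemma A_set_single:
  assumes "t \<le> u" "u \<le> T" "\<xi> \<in> L0 M (F u) (\<lambda>w. uminus ` solv_cone Sb Sa u w)"
  shows "\<xi> \<in> A_set M F Sb Sa t T"
proof -
  define \<xi>s where "\<xi>s v w = (if v = u then \<xi> w else 0)" for v w
  have "(\<lambda>_. 0) \<in> L0 M (F v) (\<lambda>w. uminus ` solv_cone Sb Sa v w)" for v
    unfolding L0_def by (simp add: mem_uminus_image_iff zero_mem_solv_cone)
  then have "\<xi>s v \<in> L0 M (F v) (\<lambda>w. uminus ` solv_cone Sb Sa v w)" for v
    using assms(3) by (cases "v = u") (simp_all add: \<xi>s_def[abs_def])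
  then have "\<forall>v\<in>{t..T}. \<xi>s v \<in> L0 M (F v) (\<lambda>w. uminus ` solv_cone Sb Sa v w)" by blast
  moreover have "\<xi> = (\<lambda>w. \<Sum>v\<in>{t..T}. \<xi>s v w)"
    using assms(1,2) by (simp add: \<xi>s_def sum.delta)
  ultimately show ?thesis unfolding A_set_def by blast
qed

lemma A_set_last:
  "\<xi> \<in> A_set M F Sb Sa T T \<Longrightarrow> \<xi> \<in> L0 M (F T) (\<lambda>w. uminus ` solv_cone Sb Sa T w)"
  unfolding A_set_def by auto

lemma A_set_Suc:
  assumes "t < T" "\<xi> \<in> A_set M F Sb Sa t T"
  obtains \<xi>t \<xi>' where "\<xi>t \<in> L0 M (F t) (\<lambda>w. uminus ` solv_cone Sb Sa t w)"
    and "\<xi>' \<in> A_set M F Sb Sa (Suc t) T" and "\<xi> = (\<lambda>w. \<xi>t w + \<xi>' w)"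
proof -
  from assms(2) obtain \<xi>s where
    \<xi>s: "\<forall>u\<in>{t..T}. \<xi>s u \<in> L0 M (F u) (\<lambda>w. uminus ` solv_cone Sb Sa u w)"
    and \<xi>: "\<xi> = (\<lambda>w. \<Sum>u\<in>{t..T}. \<xi>s u w)"
    unfolding A_set_def by blast
  show thesis
  proof
    show "\<xi>s t \<in> L0 M (F t) (\<lambda>w. uminus ` solv_cone Sb Sa t w)" using \<xi>s assms(1) by simp
    show "(\<lambda>w. \<Sum>u\<in>{Suc t..T}. \<xi>s u w) \<in> A_set M F Sb Sa (Suc t) T"
      unfolding A_set_def using \<xi>s by (intro CollectI exI[of _ \<xi>s]) auto
    show "\<xi> = (\<lambda>w. \<xi>s t w + (\<Sum>u\<in>{Suc t..T}. \<xi>s u w))"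
      unfolding \<xi> using assms(1) by (simp add: sum.atLeast_Suc_atMost)
  qed
qed

section \<open>No-arbitrage and inherited price bounds\<close>

lemma NA2_one_period:
  assumes NA: "NA2 M F Sb Sa T" and filt: "filtration (space M) F" and "t < T"
    and \<eta>: "\<eta> \<in> borel_measurable (F t)"
    and \<xi>: "\<xi> \<in> L0 M (F (Suc t)) (\<lambda>w. uminus ` solv_cone Sb Sa (Suc t) w)"
    and solvent: "AE w in M. \<eta> w + \<xi> w \<in> solv_cone Sb Sa T w"
  shows "AE w in M. \<eta> w \<in> solv_cone Sb Sa t w"
proof -
  interpret filtration "space M" F by (fact filt)
  have "\<xi> \<in> A_set M F Sb Sa t T"
    using \<xi> \<open>t < T\<close> by (intro A_set_single[of t "Suc t"]) auto
  moreover have "(\<lambda>w. \<eta> w + \<xi> w) \<in> borel_measurable (F T)"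
  proof (rule borel_measurable_add)
    show "\<eta> \<in> borel_measurable (F T)"
      using measurable_F_mono[OF _ \<eta>] \<open>t < T\<close> by simp
    have "\<xi> \<in> borel_measurable (F (Suc t))" using \<xi> unfolding L0_def by blast
    from measurable_F_mono[OF _ this] \<open>t < T\<close> show "\<xi> \<in> borel_measurable (F T)" by simp
  qed
  ultimately have "\<exists>\<xi>\<in>A_set M F Sb Sa t T. (\<lambda>w. \<eta> w + \<xi> w) \<in> L0 M (F T) (solv_cone Sb Sa T)"
    using solvent unfolding L0_def by blast
  with NA \<eta> \<open>t < T\<close> have "\<eta> \<in> L0 M (F t) (solv_cone Sb Sa t)"
    unfolding NA2_def by simp
  then show ?thesis unfolding L0_def by blast
qed

lemma NA2_imp_ask_le_upper_bound:
  assumes NA: "NA2 M F Sb Sa T" and filt: "filtration (space M) F" and "t < T"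
    and [measurable]: "Sa t \<in> borel_measurable (F t)" "Sa (Suc t) \<in> borel_measurable (F (Suc t))"
    and spread: "AE w in M. Sb t w \<le> Sa t w"
    and [measurable]: "Z \<in> borel_measurable (F t)"
    and bound: "AE w in M. ereal (Sa (Suc t) w) \<le> Z w"
  shows "AE w in M. ereal (Sa t w) \<le> Z w"
proof -
  interpret filtration "space M" F by (fact filt)
  define C where "C w \<longleftrightarrow> Z w < ereal (Sa t w) \<and> Z w \<noteq> -\<infinity>" for w
  have [measurable]: "Measurable.pred (F t) C" unfolding C_def by measurable
  then have [measurable]: "Measurable.pred (F (Suc t)) C" by (rule measurable_F_mono[rotated]) simp
  text \<open>On \<open>C\<close>: sell one unit for \<open>Z\<close> at time \<open>t\<close>, buy it back at the ask at \<open>t + 1\<close>.\<close>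
  define \<eta> where "\<eta> w = (if C w then (real_of_ereal (Z w), -1 :: real) else 0)" for w
  define \<xi> where "\<xi> w = (if C w then (- Sa (Suc t) w, 1 :: real) else 0)" for w
  have "AE w in M. \<eta> w \<in> solv_cone Sb Sa t w"
  proof (rule NA2_one_period[OF NA filt \<open>t < T\<close>])
    show "\<eta> \<in> borel_measurable (F t)" unfolding \<eta>_def by measurable
    have "- \<xi> w \<in> solv_cone Sb Sa (Suc t) w" for w
      by (simp add: \<xi>_def solv_cone_def)
    moreover have "\<xi> \<in> borel_measurable (F (Suc t))" unfolding \<xi>_def by measurable
    ultimately show "\<xi> \<in> L0 M (F (Suc t)) (\<lambda>w. uminus ` solv_cone Sb Sa (Suc t) w)"
      unfolding L0_def mem_uminus_image_iff by simp
    show "AE w in M. \<eta> w + \<xi> w \<in> solv_cone Sb Sa T w"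
      using bound
    proof eventually_elim
      case (elim w)
      show ?case
      proof (cases "C w")
        case True
        then obtain z where "Z w = ereal z" unfolding C_def by (cases "Z w") auto
        with True elim show ?thesis by (simp add: \<eta>_def \<xi>_def cash_mem_solv_cone)
      qed (simp add: \<eta>_def \<xi>_def zero_mem_solv_cone)
    qed
  qed
  then show ?thesis using spread bound
  proof eventually_elim
    case (elim w)
    show ?case
    proof (rule ccontr)
      assume "\<not> ereal (Sa t w) \<le> Z w"
      with elim(3) obtain z where z: "Z w = ereal z" "z < Sa t w" by (cases "Z w") auto
      then have "(z, -1) \<in> solv_cone Sb Sa t w"
        using elim(1) by (simp add: \<eta>_def C_def)
      with z(2) show False by (simp add: mem_solv_cone_iff[where Sb = Sb and Sa = Sa, OF elim(2)])
    qed
  qed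
qed

lemma NA2_imp_lower_bound_le_bid:
  assumes NA: "NA2 M F Sb Sa T" and filt: "filtration (space M) F" and "t < T"
    and [measurable]: "Sb t \<in> borel_measurable (F t)" "Sb (Suc t) \<in> borel_measurable (F (Suc t))"
    and spread: "AE w in M. Sb t w \<le> Sa t w"
    and [measurable]: "Z \<in> borel_measurable (F t)"
    and bound: "AE w in M. Z w \<le> ereal (Sb (Suc t) w)"
  shows "AE w in M. Z w \<le> ereal (Sb t w)"
proof -
  interpret filtration "space M" F by (fact filt)
  define C where "C w \<longleftrightarrow> ereal (Sb t w) < Z w \<and> Z w \<noteq> \<infinity>" for w
  have [measurable]: "Measurable.pred (F t) C" unfolding C_def by measurable
  then have [measurable]: "Measurable.pred (F (Suc t)) C" by (rule measurable_F_mono[rotated]) simp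
  text \<open>On \<open>C\<close>: buy one unit for \<open>Z\<close> at time \<open>t\<close>, sell it back at the bid at \<open>t + 1\<close>.\<close>
  define \<eta> where "\<eta> w = (if C w then (- real_of_ereal (Z w), 1 :: real) else 0)" for w
  define \<xi> where "\<xi> w = (if C w then (Sb (Suc t) w, -1 :: real) else 0)" for w
  have "AE w in M. \<eta> w \<in> solv_cone Sb Sa t w"
  proof (rule NA2_one_period[OF NA filt \<open>t < T\<close>])
    show "\<eta> \<in> borel_measurable (F t)" unfolding \<eta>_def by measurable
    have "- \<xi> w \<in> solv_cone Sb Sa (Suc t) w" for w
      by (simp add: \<xi>_def solv_cone_def)
    moreover have "\<xi> \<in> borel_measurable (F (Suc t))" unfolding \<xi>_def by measurable
    ultimately show "\<xi> \<in> L0 M (F (Suc t)) (\<lambda>w. uminus ` solv_cone Sb Sa (Suc t) w)"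
      unfolding L0_def mem_uminus_image_iff by simp
    show "AE w in M. \<eta> w + \<xi> w \<in> solv_cone Sb Sa T w"
      using bound
    proof eventually_elim
      case (elim w)
      show ?case
      proof (cases "C w")
        case True
        then obtain z where "Z w = ereal z" unfolding C_def by (cases "Z w") auto
        with True elim show ?thesis by (simp add: \<eta>_def \<xi>_def cash_mem_solv_cone)
      qed (simp add: \<eta>_def \<xi>_def zero_mem_solv_cone)
    qed
  qed
  then show ?thesis using spread bound
  proof eventually_elim
    case (elim w)
    show ?case
    proof (rule ccontr)
      assume "\<not> Z w \<le> ereal (Sb t w)"
      with elim(3) obtain z where z: "Z w = ereal z" "Sb t w < z" by (cases "Z w") auto
      then have "(- z, 1) \<in> solv_cone Sb Sa t w"
        using elim(1) by (simp add: \<eta>_def C_def)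
      with z(2) show False by (simp add: mem_solv_cone_iff[where Sb = Sb and Sa = Sa, OF elim(2)])
    qed
  qed
qed

definition bounds_inherited ::
    "'a measure \<Rightarrow> (nat \<Rightarrow> 'a measure) \<Rightarrow> (nat \<Rightarrow> 'a \<Rightarrow> real) \<Rightarrow> (nat \<Rightarrow> 'a \<Rightarrow> real) \<Rightarrow> nat \<Rightarrow> bool" where
  "bounds_inherited M F Sb Sa t \<longleftrightarrow>
     (\<forall>Z\<in>borel_measurable (F t).
        (AE w in M. ereal (Sa (Suc t) w) \<le> Z w) \<longrightarrow> (AE w in M. ereal (Sa t w) \<le> Z w)) \<and>
     (\<forall>Z\<in>borel_measurable (F t).
        (AE w in M. Z w \<le> ereal (Sb (Suc t) w)) \<longrightarrow> (AE w in M. Z w \<le> ereal (Sb t w)))"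

lemma bounds_inherited_iff_cond_ess:
  assumes "prob_space M" "subalgebra M (F t)"
  shows "bounds_inherited M F Sb Sa t \<longleftrightarrow>
    (AE w in M. ereal (Sa t w) \<le> cond_ess_sup M (F t) (Sa (Suc t)) w) \<and>
    (AE w in M. cond_ess_inf M (F t) (Sb (Suc t)) w \<le> ereal (Sb t w))"
  unfolding bounds_inherited_def AE_le_cond_ess_sup_iff[OF assms] AE_cond_ess_inf_le_iff[OF assms] ..

lemma NA2_imp_bounds_inherited:
  assumes "NA2 M F Sb Sa T" "filtration (space M) F" "t < T"
    and "Sb t \<in> borel_measurable (F t)" "Sb (Suc t) \<in> borel_measurable (F (Suc t))"
    and "Sa t \<in> borel_measurable (F t)" "Sa (Suc t) \<in> borel_measurable (F (Suc t))"
    and "AE w in M. Sb t w \<le> Sa t w"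
  shows "bounds_inherited M F Sb Sa t"
  unfolding bounds_inherited_def
  using NA2_imp_ask_le_upper_bound[OF assms(1-3,6-8)] NA2_imp_lower_bound_le_bid[OF assms(1-5,8)]
  by blast

lemma bounds_inherited_AE_mem_solv_cone:
  assumes bounds: "bounds_inherited M F Sb Sa t"
    and \<zeta>: "\<zeta> \<in> borel_measurable (F t)" "AE w in M. \<zeta> w \<in> solv_cone Sb Sa (Suc t) w"
    and spread: "AE w in M. Sb t w \<le> Sa t w" "AE w in M. Sb (Suc t) w \<le> Sa (Suc t) w"
  shows "AE w in M. \<zeta> w \<in> solv_cone Sb Sa t w"
proof -
  note \<zeta>(1)[measurable]
  define break_even where "break_even w = - fst (\<zeta> w) / snd (\<zeta> w)" for w
  define Zb where "Zb w = (if 0 < snd (\<zeta> w) then ereal (break_even w) else -\<infinity>)" for w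
  define Za where "Za w = (if snd (\<zeta> w) < 0 then ereal (break_even w) else \<infinity>)" for w
  have "Zb \<in> borel_measurable (F t)" "Za \<in> borel_measurable (F t)"
    unfolding Zb_def Za_def break_even_def by measurable
  moreover have "AE w in M. Zb w \<le> ereal (Sb (Suc t) w)"
    using \<zeta>(2) spread(2) by eventually_elim (simp add: Zb_def break_even_def mem_solv_cone_iff_break_even)
  moreover have "AE w in M. ereal (Sa (Suc t) w) \<le> Za w"
    using \<zeta>(2) spread(2) by eventually_elim (simp add: Za_def break_even_def mem_solv_cone_iff_break_even)
  ultimately have "AE w in M. Zb w \<le> ereal (Sb t w)" "AE w in M. ereal (Sa t w) \<le> Za w"
    using bounds unfolding bounds_inherited_def by blast+
  with \<zeta>(2) spread show ?thesis
    by eventually_elim (auto simp: Zb_def Za_def break_even_def mem_solv_cone_iff_break_even)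
qed

lemma bounds_inherited_imp_NA2:
  assumes filt: "filtration (space M) F"
    and bounds: "\<And>t. t < T \<Longrightarrow> bounds_inherited M F Sb Sa t"
    and spread: "\<And>t. t \<le> T \<Longrightarrow> AE w in M. Sb t w \<le> Sa t w"
  shows "NA2 M F Sb Sa T"
proof -
  interpret filtration "space M" F by (fact filt)
  have "AE w in M. \<eta> w \<in> solv_cone Sb Sa t w"
    if "t \<le> T" "\<eta> \<in> borel_measurable (F t)" "\<xi> \<in> A_set M F Sb Sa t T"
      and "AE w in M. \<eta> w + \<xi> w \<in> solv_cone Sb Sa T w"
    for t \<eta> \<xi>
    using that
  proof (induction t arbitrary: \<eta> \<xi> rule: inc_induct)
    case base
    show ?case
      using base.prems(3) A_set_last[OF base.prems(2)] by (rule AE_mem_solv_cone_cancel)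
  next
    case (step t)
    obtain \<xi>t \<xi>' where \<xi>t: "\<xi>t \<in> L0 M (F t) (\<lambda>w. uminus ` solv_cone Sb Sa t w)"
      and \<xi>': "\<xi>' \<in> A_set M F Sb Sa (Suc t) T" and \<xi>: "\<xi> = (\<lambda>w. \<xi>t w + \<xi>' w)"
      using A_set_Suc[OF step.hyps(2) step.prems(2)] by blast
    define \<eta>' where "\<eta>' w = \<eta> w + \<xi>t w" for w
    have "\<xi>t \<in> borel_measurable (F t)" using \<xi>t unfolding L0_def by blast
    with step.prems(1) have \<eta>': "\<eta>' \<in> borel_measurable (F t)"
      unfolding \<eta>'_def by measurable
    moreover have "AE w in M. \<eta>' w + \<xi>' w \<in> solv_cone Sb Sa T w"
      using step.prems(3) by (simp add: \<eta>'_def \<xi> add.assoc)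
    ultimately have "AE w in M. \<eta>' w \<in> solv_cone Sb Sa (Suc t) w"
      using measurable_F_mono[OF _ \<eta>', of "Suc t"] \<xi>' by (simp add: step.IH)
    moreover have "AE w in M. Sb t w \<le> Sa t w" "AE w in M. Sb (Suc t) w \<le> Sa (Suc t) w"
      using step.hyps(2) by (simp_all add: spread)
    ultimately have "AE w in M. \<eta>' w \<in> solv_cone Sb Sa t w"
      by (rule bounds_inherited_AE_mem_solv_cone[OF bounds[OF step.hyps(2)] \<eta>'])
    then show ?case
      using \<xi>t unfolding \<eta>'_def by (rule AE_mem_solv_cone_cancel)
  qed
  then show ?thesis unfolding NA2_def L0_def by blast
qed

theorem theorem9p1:
  fixes M :: "'a measure" and F :: "nat \<Rightarrow> 'a measure"
    and Sb Sa :: "nat \<Rightarrow> 'a \<Rightarrow> real" and T :: nat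
  assumes "prob_space M"
    and "complete_measure M"
    and "filtration (space M) F"
    and "\<And>t. subalgebra M (F t)"
    and "\<And>A. A \<in> sets (F 0) \<Longrightarrow> measure M A = 0 \<or> measure M A = 1"
    and "\<And>t. t \<le> T \<Longrightarrow> Sb t \<in> borel_measurable (F t)"
    and "\<And>t. t \<le> T \<Longrightarrow> Sa t \<in> borel_measurable (F t)"
    and "\<And>t. t \<le> T \<Longrightarrow> AE w in M. 0 < Sb t w \<and> Sb t w \<le> Sa t w"
  shows "NA2 M F Sb Sa T \<longleftrightarrow>
     (\<forall>t < T. (AE w in M. cond_ess_sup M (F t) (Sa (t + 1)) w \<ge> ereal (Sa t w)) \<and>
              (AE w in M. ereal (Sb t w) \<ge> cond_ess_inf M (F t) (Sb (t + 1)) w))"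
proof -
  have spread: "AE w in M. Sb t w \<le> Sa t w" if "t \<le> T" for t
    using assms(8)[OF that] by eventually_elim simp
  have "NA2 M F Sb Sa T \<longleftrightarrow> (\<forall>t < T. bounds_inherited M F Sb Sa t)"
  proof
    show "\<forall>t < T. bounds_inherited M F Sb Sa t" if "NA2 M F Sb Sa T"
      using NA2_imp_bounds_inherited[OF that assms(3)] assms(6,7) spread by simp
    show "NA2 M F Sb Sa T" if "\<forall>t < T. bounds_inherited M F Sb Sa t"
      using bounds_inherited_imp_NA2[OF assms(3)] that spread by blast
  qed
  then show ?thesis
    using bounds_inherited_iff_cond_ess[OF assms(1,4)] by simp
qed

end
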